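(* Consider the deterministic split-node max-neighbour algorithm described in the context, on a dynamic graph $(G_r)_{r\ge1}$ with node set $V$. For every round $r\ge1$, \[ D_r\ge t_{r-1}/30, \] where $t_r:=\max_{u,v\in V}|w_r(u)-w_r(v)|$.
   Context: Setting: a fixed set $V$ of $n$ nodes, a sequence of connected graphs $G_r=(V,E_r)$ ($r\ge1$), $N_r(v)$ the neighbours of $v$ in $G_r$, non-negative real loads $w_0(v)$, and $w_r(v)$ the load of $v$ at the end of round $r$. Algorithm: each node $v$ is split into two virtual nodes $v_s$ (sender) and $v_a$ (receiver). In round $r$: set $w_r^1(v_s)=w_r^1(v_a)=w_{r-1}(v)/2$. Each $v_s$ sends a proposal to $u_a$ where $u\in N_r(v)$ maximizes $|w_{r-1}(u)-w_{r-1}(v)|$ (ties broken by a fixed deterministic rule). Each $v_a$ that received proposals accepts exactly one, from $u_s$ with $u$ maximizing $|w_{r-1}(u)-w_{r-1}(v)|$ among proposers (deterministic tie-breaking). For each accepted pair $(u_s,v_a)$, set both virtual loads to $(w_r^1(u_s)+w_r^1(v_a))/2$; other virtual nodes keep their value; then $w_r(v)$ is the sum of the two virtual loads of $v$. An ordered pair $(u,v)$ connects at round $r$ if $u_s$'s proposal to $v_a$ was accepted in round $r$; $A_r$ is the set of ordered pairs that connect at round $r$, and $D_r=\frac12\sum_{(u,v)\in A_r}|w_{r-1}(u)-w_{r-1}(v)|$. *)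

theory Defs
  imports Complex_Main
begin

text \<open>Graph sequence: E r is the (undirected) edge set of G_r, given as a set of ordered pairs.
  N r v is the neighbourhood of v in G_r.\<close>

definition nbrs :: "(nat \<Rightarrow> ('v \<times> 'v) set) \<Rightarrow> nat \<Rightarrow> 'v \<Rightarrow> 'v set" where
  "nbrs E r v = {u. (v, u) \<in> E r}"

definition connected_graph :: "'v set \<Rightarrow> ('v \<times> 'v) set \<Rightarrow> bool" where
  "connected_graph V F \<longleftrightarrow> F \<subseteq> V \<times> V \<and> sym F \<and> irrefl F \<and>
     (\<forall>u\<in>V. \<forall>v\<in>V. (u, v) \<in> F\<^sup>*)"

text \<open>Round-level notions. N: neighbourhoods of the current graph, p: proposal target of each
  sender, a: proposal accepted by each receiver, w: loads at the beginning of the round.\<close>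

definition proposers :: "'v set \<Rightarrow> ('v \<Rightarrow> 'v set) \<Rightarrow> ('v \<Rightarrow> 'v) \<Rightarrow> 'v \<Rightarrow> 'v set" where
  "proposers V N p v = {u \<in> V. N u \<noteq> {} \<and> p u = v}"

definition valid_proposal ::
  "'v set \<Rightarrow> ('v \<Rightarrow> 'v set) \<Rightarrow> ('v \<Rightarrow> real) \<Rightarrow> ('v \<Rightarrow> 'v) \<Rightarrow> bool" where
  "valid_proposal V N w p \<longleftrightarrow>
     (\<forall>v\<in>V. N v \<noteq> {} \<longrightarrow> p v \<in> N v \<and> (\<forall>u\<in>N v. \<bar>w u - w v\<bar> \<le> \<bar>w (p v) - w v\<bar>))"

definition valid_accept ::
  "'v set \<Rightarrow> ('v \<Rightarrow> 'v set) \<Rightarrow> ('v \<Rightarrow> real) \<Rightarrow> ('v \<Rightarrow> 'v) \<Rightarrow> ('v \<Rightarrow> 'v) \<Rightarrow> bool" where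
  "valid_accept V N w p a \<longleftrightarrow>
     (\<forall>v\<in>V. proposers V N p v \<noteq> {} \<longrightarrow> a v \<in> proposers V N p v \<and>
        (\<forall>u\<in>proposers V N p v. \<bar>w u - w v\<bar> \<le> \<bar>w (a v) - w v\<bar>))"

definition connections ::
  "'v set \<Rightarrow> ('v \<Rightarrow> 'v set) \<Rightarrow> ('v \<Rightarrow> 'v) \<Rightarrow> ('v \<Rightarrow> 'v) \<Rightarrow> ('v \<times> 'v) set" where
  "connections V N p a = {(u, v). u \<in> V \<and> N u \<noteq> {} \<and> p u = v \<and> a v = u}"

text \<open>One round: the sender half and the receiver half of each node.\<close>
definition step ::
  "'v set \<Rightarrow> ('v \<Rightarrow> 'v set) \<Rightarrow> ('v \<Rightarrow> 'v) \<Rightarrow> ('v \<Rightarrow> 'v) \<Rightarrow> ('v \<Rightarrow> real) \<Rightarrow> 'v \<Rightarrow> real" where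
  "step V N p a w v =
     (if (v, p v) \<in> connections V N p a then (w v / 2 + w (p v) / 2) / 2 else w v / 2)
   + (if proposers V N p v \<noteq> {} then (w (a v) / 2 + w v / 2) / 2 else w v / 2)"

text \<open>load ... r = w_r. Proposal/acceptance choices for round r are P r and Acc r.\<close>
primrec load ::
  "'v set \<Rightarrow> (nat \<Rightarrow> ('v \<times> 'v) set) \<Rightarrow> (nat \<Rightarrow> 'v \<Rightarrow> 'v) \<Rightarrow> (nat \<Rightarrow> 'v \<Rightarrow> 'v)
    \<Rightarrow> ('v \<Rightarrow> real) \<Rightarrow> nat \<Rightarrow> 'v \<Rightarrow> real" where
  "load V E P Acc w0 0 = w0"
| "load V E P Acc w0 (Suc r) =
     step V (nbrs E (Suc r)) (P (Suc r)) (Acc (Suc r)) (load V E P Acc w0 r)"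

definition D_round ::
  "'v set \<Rightarrow> (nat \<Rightarrow> ('v \<times> 'v) set) \<Rightarrow> (nat \<Rightarrow> 'v \<Rightarrow> 'v) \<Rightarrow> (nat \<Rightarrow> 'v \<Rightarrow> 'v)
    \<Rightarrow> ('v \<Rightarrow> real) \<Rightarrow> nat \<Rightarrow> real" where
  "D_round V E P Acc w0 r =
     (1/2) * (\<Sum>(u, v)\<in>connections V (nbrs E r) (P r) (Acc r).
                \<bar>load V E P Acc w0 (r - 1) u - load V E P Acc w0 (r - 1) v\<bar>)"

definition discrepancy :: "'v set \<Rightarrow> ('v \<Rightarrow> real) \<Rightarrow> real" where
  "discrepancy V w = Max {\<bar>w u - w v\<bar> | u v. u \<in> V \<and> v \<in> V}"

end

theory Submission
  imports Defs "HOL-Analysis.Analysis"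
begin

text \<open>
  Write \<open>a x\<close> for the proposer accepted by a receiver \<open>x\<close> and
  \<open>e x = \<bar>w (a x) - w x\<bar>\<close>, so that \<open>D_r = (\<Sum>x. e x) / 2\<close>,
  summed over the receivers that got a proposal. If \<open>y\<close> lies between the loads of two
  nodes, connectivity yields an edge \<open>(s, t)\<close> whose loads straddle \<open>y\<close>.
  Then \<open>s\<close> proposes to some \<open>x\<close> with
  \<open>\<bar>w x - w s\<bar> \<ge> \<bar>w t - w s\<bar> \<ge> \<bar>y - w s\<bar>\<close>,
  and \<open>x\<close> accepts a proposal at least as unbalanced as that of \<open>s\<close>, so
  \<open>\<bar>w s - w x\<bar> \<le> e x\<close> and \<open>\<bar>y - w x\<bar> \<le> 2 e x\<close>.
  Hence the intervals \<open>[w x - 2 e x, w x + 2 e x]\<close> cover \<open>[min w, max w]\<close>,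
  and comparing lengths gives \<open>t_{r-1} \<le> 4 \<Sum>x. e x = 8 D_r\<close>, which is
  stronger than the claimed constant 30.
\<close>

lemma interval_length_le_sum_cover:
  fixes l h :: "'i \<Rightarrow> real"
  assumes "finite I" "\<And>i. i \<in> I \<Longrightarrow> l i \<le> h i" "lo \<le> hi"
    and "{lo..hi} \<subseteq> (\<Union>i\<in>I. {l i..h i})"
  shows "hi - lo \<le> (\<Sum>i\<in>I. h i - l i)"
proof -
  have cover_fmeasurable: "(\<Union>i\<in>I. {l i..h i}) \<in> fmeasurable lborel"
    using assms(1) by (intro fmeasurable.finite_UN fmeasurable_compact) auto
  have "hi - lo = measure lborel {lo..hi}"
    using assms(3) by simp
  also have "\<dots> \<le> measure lborel (\<Union>i\<in>I. {l i..h i})"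
    by (rule measure_mono_fmeasurable[OF assms(4) _ cover_fmeasurable]) simp
  also have "\<dots> \<le> (\<Sum>i\<in>I. measure lborel {l i..h i})"
    by (rule measure_UNION_le[OF assms(1)]) simp
  also have "\<dots> = (\<Sum>i\<in>I. h i - l i)"
    using assms(2) by (intro sum.cong) auto
  finally show ?thesis .
qed

lemma trancl_edge_straddles:
  fixes w :: "'a \<Rightarrow> real"
  assumes "(u, v) \<in> F\<^sup>+" "w u \<le> y" "y \<le> w v"
  shows "\<exists>s t. (s, t) \<in> F \<and> w s \<le> y \<and> y \<le> w t"
  using assms
proof (induction v rule: trancl_induct)
  case (base v)
  then show ?case by blast
next
  case (step b c)
  show ?case
  proof (cases "y \<le> w b")
    case True
    then show ?thesis using step.IH step.prems(1) by blast
  next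
    case False
    then have "w b \<le> y" by simp
    then show ?thesis using step.hyps(2) step.prems(2) by blast
  qed
qed

lemma discrepancy_le:
  assumes "finite V" "V \<noteq> {}" "\<And>u v. u \<in> V \<Longrightarrow> v \<in> V \<Longrightarrow> \<bar>w u - w v\<bar> \<le> B"
  shows "discrepancy V w \<le> B"
proof -
  have "{\<bar>w u - w v\<bar> | u v. u \<in> V \<and> v \<in> V} = (\<lambda>(u, v). \<bar>w u - w v\<bar>) ` (V \<times> V)"
    by auto
  then have "finite {\<bar>w u - w v\<bar> | u v. u \<in> V \<and> v \<in> V}"
    using assms(1) by simp
  moreover have "{\<bar>w u - w v\<bar> | u v. u \<in> V \<and> v \<in> V} \<noteq> {}"
    using assms(2) by blast
  ultimately show ?thesis
    using assms(3) unfolding discrepancy_def by (auto simp: Max_le_iff)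
qed

definition accepting :: "'v set \<Rightarrow> ('v \<Rightarrow> 'v set) \<Rightarrow> ('v \<Rightarrow> 'v) \<Rightarrow> 'v set" where
  "accepting V N p = {x \<in> V. proposers V N p x \<noteq> {}}"

locale balancing_round =
  fixes V :: "'v set" and N :: "'v \<Rightarrow> 'v set" and w :: "'v \<Rightarrow> real" and p a :: "'v \<Rightarrow> 'v"
  assumes finite_nodes: "finite V"
    and nbrs_subset: "\<And>v. v \<in> V \<Longrightarrow> N v \<subseteq> V"
    and proposal: "valid_proposal V N w p"
    and accept: "valid_accept V N w p a"
begin

lemma proposal_nbr: "v \<in> V \<Longrightarrow> N v \<noteq> {} \<Longrightarrow> p v \<in> N v"
  using proposal unfolding valid_proposal_def by blast

lemma proposal_max: "v \<in> V \<Longrightarrow> u \<in> N v \<Longrightarrow> \<bar>w u - w v\<bar> \<le> \<bar>w (p v) - w v\<bar>"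
  using proposal unfolding valid_proposal_def by blast

lemma accepted_proposer: "x \<in> accepting V N p \<Longrightarrow> a x \<in> proposers V N p x"
  using accept unfolding valid_accept_def accepting_def by blast

lemma accepted_max:
  "x \<in> V \<Longrightarrow> u \<in> proposers V N p x \<Longrightarrow> \<bar>w u - w x\<bar> \<le> \<bar>w (a x) - w x\<bar>"
  using accept unfolding valid_accept_def by blast

lemma connections_eq: "connections V N p a = (\<lambda>x. (a x, x)) ` accepting V N p"
proof (intro equalityI subsetI)
  fix z assume "z \<in> connections V N p a"
  then obtain u v where z: "z = (u, v)" "u \<in> V" "N u \<noteq> {}" "p u = v" "a v = u"
    unfolding connections_def by blast
  then have "v \<in> V"
    using proposal_nbr nbrs_subset by blast
  moreover have "u \<in> proposers V N p v"
    using z unfolding proposers_def by blast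
  ultimately have "v \<in> accepting V N p"
    unfolding accepting_def by blast
  then show "z \<in> (\<lambda>x. (a x, x)) ` accepting V N p"
    using z by force
next
  fix z assume "z \<in> (\<lambda>x. (a x, x)) ` accepting V N p"
  then obtain x where "x \<in> accepting V N p" "z = (a x, x)"
    by blast
  then show "z \<in> connections V N p a"
    using accepted_proposer unfolding proposers_def connections_def by blast
qed

lemma sum_connections_eq:
  "(\<Sum>(u, v)\<in>connections V N p a. \<bar>w u - w v\<bar>) = (\<Sum>x\<in>accepting V N p. \<bar>w (a x) - w x\<bar>)"
  unfolding connections_eq by (subst sum.reindex) (auto simp: inj_on_def)

lemma near_accepting:
  assumes "s \<in> V" "t \<in> N s" "\<bar>y - w s\<bar> \<le> \<bar>w t - w s\<bar>"
  shows "\<exists>x\<in>accepting V N p. \<bar>y - w x\<bar> \<le> 2 * \<bar>w (a x) - w x\<bar>"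
proof -
  define x where "x = p s"
  have "x \<in> V"
    using assms(1,2) proposal_nbr nbrs_subset unfolding x_def by blast
  moreover have s_proposes: "s \<in> proposers V N p x"
    using assms(1,2) unfolding proposers_def x_def by blast
  ultimately have "x \<in> accepting V N p"
    unfolding accepting_def by blast
  moreover have "\<bar>w s - w x\<bar> \<le> \<bar>w (a x) - w x\<bar>"
    using accepted_max[OF \<open>x \<in> V\<close> s_proposes] .
  moreover have "\<bar>y - w s\<bar> \<le> \<bar>w x - w s\<bar>"
    using assms proposal_max unfolding x_def by fastforce
  ultimately show ?thesis
    using abs_triangle_ineq[of "y - w s" "w s - w x"] abs_minus_commute[of "w x" "w s"]
    by (intro bexI[of _ x]) auto
qed

lemma between_loads_near_accepting:
  assumes "connected_graph V F" "\<And>s t. (s, t) \<in> F \<Longrightarrow> t \<in> N s"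
    and "u \<in> V" "v \<in> V" "w u < w v" "y \<in> {w u..w v}"
  shows "\<exists>x\<in>accepting V N p. \<bar>y - w x\<bar> \<le> 2 * \<bar>w (a x) - w x\<bar>"
proof -
  have "(u, v) \<in> F\<^sup>+"
    using assms(1,3,4,5) unfolding connected_graph_def by (metis rtranclD less_irrefl)
  then obtain s t where "(s, t) \<in> F" "w s \<le> y" "y \<le> w t"
    using trancl_edge_straddles assms(6) by (metis atLeastAtMost_iff)
  moreover have "s \<in> V"
    using assms(1) \<open>(s, t) \<in> F\<close> unfolding connected_graph_def by blast
  ultimately show ?thesis
    using near_accepting[of s t y] assms(2) by fastforce
qed

lemma abs_diff_le_accepted_sum:
  assumes "connected_graph V F" "\<And>s t. (s, t) \<in> F \<Longrightarrow> t \<in> N s" "u \<in> V" "v \<in> V"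
  shows "\<bar>w u - w v\<bar> \<le> 4 * (\<Sum>x\<in>accepting V N p. \<bar>w (a x) - w x\<bar>)"
proof -
  define e where "e x = \<bar>w (a x) - w x\<bar>" for x
  have ordered: "w v' - w u' \<le> (\<Sum>x\<in>accepting V N p. (w x + 2 * e x) - (w x - 2 * e x))"
    if "u' \<in> V" "v' \<in> V" "w u' < w v'" for u' v'
  proof (rule interval_length_le_sum_cover)
    show "{w u'..w v'} \<subseteq> (\<Union>x\<in>accepting V N p. {w x - 2 * e x..w x + 2 * e x})"
      using between_loads_near_accepting[OF assms(1,2) that] unfolding e_def
      by (force simp: abs_le_iff)
  qed (use finite_nodes that in \<open>auto simp: accepting_def e_def\<close>)
  have "0 \<le> (\<Sum>x\<in>accepting V N p. 4 * e x)"
    unfolding e_def by (simp add: sum_nonneg)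
  then have "\<bar>w u - w v\<bar> \<le> (\<Sum>x\<in>accepting V N p. 4 * e x)"
    using ordered[OF assms(3,4)] ordered[OF assms(4,3)]
    by (cases "w u" "w v" rule: linorder_cases) auto
  then show ?thesis
    unfolding e_def by (simp add: sum_distrib_left)
qed

end

theorem lemma3:
  fixes V :: "'v set" and E :: "nat \<Rightarrow> ('v \<times> 'v) set"
    and P Acc :: "nat \<Rightarrow> 'v \<Rightarrow> 'v" and w0 :: "'v \<Rightarrow> real" and r :: nat
  assumes "finite V" and "V \<noteq> {}"
    and "\<And>s. s \<ge> 1 \<Longrightarrow> connected_graph V (E s)"
    and "\<And>v. v \<in> V \<Longrightarrow> w0 v \<ge> 0"
    and "\<And>s. s \<ge> 1 \<Longrightarrow>
           valid_proposal V (nbrs E s) (load V E P Acc w0 (s - 1)) (P s)"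
    and "\<And>s. s \<ge> 1 \<Longrightarrow>
           valid_accept V (nbrs E s) (load V E P Acc w0 (s - 1)) (P s) (Acc s)"
    and "r \<ge> 1"
  shows "D_round V E P Acc w0 r \<ge> discrepancy V (load V E P Acc w0 (r - 1)) / 30"
proof -
  define w where "w = load V E P Acc w0 (r - 1)"
  define S where "S = (\<Sum>x\<in>accepting V (nbrs E r) (P r). \<bar>w (Acc r x) - w x\<bar>)"
  have connected: "connected_graph V (E r)"
    using assms(3,7) by blast
  interpret balancing_round V "nbrs E r" w "P r" "Acc r"
    using assms(1,5,6,7) connected
    by unfold_locales (auto simp: w_def nbrs_def connected_graph_def)
  have D: "D_round V E P Acc w0 r = S / 2"
    using sum_connections_eq unfolding D_round_def S_def w_def by simp
  have "discrepancy V w \<le> 4 * S"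
    using assms(1,2) abs_diff_le_accepted_sum[OF connected] unfolding S_def
    by (intro discrepancy_le) (auto simp: nbrs_def)
  moreover have "0 \<le> S"
    unfolding S_def by (simp add: sum_nonneg)
  ultimately show ?thesis
    unfolding D w_def by linarith
qed

end
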